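(* A set $\mathbf D$ of tilings is a Condorcet super-domain if and only if for any three tilings $T_1,T_2,T_3\in\mathbf D$, the set $sm(T_1,T_2,T_3)=(T_1\cap T_2)\cup(T_2\cap T_3)\cup(T_1\cap T_3)$ is a tiling.
   Context: Fix an integer $n\ge 3$ and write $[n]=\{1,\dots,n\}$. Let $\Lambda$ be the set of 3-element subsets of $[n]$; a triple $\{i,j,k\}$ with $i<j<k$ is written $ijk$. For a 4-element subset $F=\{i<j<k<l\}$ of $[n]$, the stick of $F$ is the sequence $(ijk,\ ijl,\ ikl,\ jkl)$. A tiling (the inversion set of a rhombus tiling of the zonogon $Z(n;2)$) is a subset $T\subseteq\Lambda$ such that for every 4-element $F\subseteq[n]$, $T\cap\mathrm{stick}(F)$ is an initial segment or a final segment of the stick (empty set and whole stick allowed). For a finite set $V$ of odd cardinality and tilings $(T_v)_{v\in V}$, $sm((T_v)_{v\in V})$ is the set of triples lying in $T_v$ for more than $|V|/2$ indices $v$. A set $\mathbf D$ of tilings is a Condorcet super-domain if for every finite $V$ of odd cardinality and every family $(T_v)_{v\in V}$ with all $T_v\in\mathbf D$, $sm((T_v)_{v\in V})$ is a tiling. *)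

theory Defs
  imports Main
begin

definition triples :: "nat \<Rightarrow> nat set set" where
  "triples n = {t. t \<subseteq> {1..n} \<and> card t = 3}"

definition stick :: "nat \<Rightarrow> nat \<Rightarrow> nat \<Rightarrow> nat \<Rightarrow> nat set list" where
  "stick i j k l = [{i,j,k}, {i,j,l}, {i,k,l}, {j,k,l}]"

definition tiling :: "nat \<Rightarrow> nat set set \<Rightarrow> bool" where
  "tiling n T \<longleftrightarrow> T \<subseteq> triples n \<and>
     (\<forall>i j k l. 1 \<le> i \<and> i < j \<and> j < k \<and> k < l \<and> l \<le> n \<longrightarrow>
        (\<exists>m \<le> 4. T \<inter> set (stick i j k l) = set (take m (stick i j k l))
                 \<or> T \<inter> set (stick i j k l) = set (drop m (stick i j k l))))"

definition sm :: "'v set \<Rightarrow> ('v \<Rightarrow> nat set set) \<Rightarrow> nat set set" where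
  "sm V T = {t. 2 * card {v \<in> V. t \<in> T v} > card V}"

text \<open>Condorcet super-domain; index sets V are finite sets of naturals (any finite set
  is in bijection with one).\<close>
definition condorcet_super_domain :: "nat \<Rightarrow> nat set set set \<Rightarrow> bool" where
  "condorcet_super_domain n D \<longleftrightarrow>
     (\<forall>(V::nat set) T. finite V \<and> odd (card V) \<and> (\<forall>v\<in>V. T v \<in> D) \<longrightarrow> tiling n (sm V T))"

end

theory Submission
  imports Defs
begin

text \<open>A set of triples meets a stick in an initial or final segment iff its membership
  never zigzags (in, out, in or out, in, out) along one of the four 3-element subsequences of
  the stick. Every triple is decided as by the simple majority for more than half of the
  voters, so any two triples are decided as by the majority for a common voter; taking such
  voters for the three pairs of a zigzag of the majority yields three voters whose median
  zigzags in the same way. Hence if all medians of three tilings are tilings, so is every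
  simple majority; conversely, the median of three tilings is their simple majority.\<close>

definition zigzag :: "'a set \<Rightarrow> 'a \<Rightarrow> 'a \<Rightarrow> 'a \<Rightarrow> bool" where
  "zigzag X x y z \<longleftrightarrow> (x \<in> X \<longleftrightarrow> z \<in> X) \<and> (x \<in> X \<longleftrightarrow> y \<notin> X)"

definition median3 :: "'a set \<Rightarrow> 'a set \<Rightarrow> 'a set \<Rightarrow> 'a set" where
  "median3 A B C = (A \<inter> B) \<union> (B \<inter> C) \<union> (A \<inter> C)"

lemma segment_iff_no_zigzag:
  assumes "distinct [a, b, c, d]"
  shows "(\<exists>m \<le> 4. X \<inter> set [a, b, c, d] = set (take m [a, b, c, d])
                 \<or> X \<inter> set [a, b, c, d] = set (drop m [a, b, c, d]))
    \<longleftrightarrow> \<not> zigzag X a b c \<and> \<not> zigzag X a b d \<and> \<not> zigzag X a c d \<and> \<not> zigzag X b c d"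
proof -
  have ex_le_4: "(\<exists>m \<le> 4. P m) \<longleftrightarrow> P 0 \<or> P 1 \<or> P 2 \<or> P 3 \<or> P (4::nat)" for P
    by (auto simp: numeral_eq_Suc le_Suc_eq)
  have segments:
    "set (take 0 [a, b, c, d]) = {}" "set (take 1 [a, b, c, d]) = {a}"
    "set (take 2 [a, b, c, d]) = {a, b}" "set (take 3 [a, b, c, d]) = {a, b, c}"
    "set (take 4 [a, b, c, d]) = {a, b, c, d}" "set (drop 0 [a, b, c, d]) = {a, b, c, d}"
    "set (drop 1 [a, b, c, d]) = {b, c, d}" "set (drop 2 [a, b, c, d]) = {c, d}"
    "set (drop 3 [a, b, c, d]) = {d}" "set (drop 4 [a, b, c, d]) = {}"
    by (simp_all add: numeral_eq_Suc)
  have distinct_elems: "a \<noteq> b" "a \<noteq> c" "a \<noteq> d" "b \<noteq> c" "b \<noteq> d" "c \<noteq> d"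
    using assms by auto
  have patterns:
    "X \<inter> {a, b, c, d} = {} \<longleftrightarrow> a \<notin> X \<and> b \<notin> X \<and> c \<notin> X \<and> d \<notin> X"
    "X \<inter> {a, b, c, d} = {a} \<longleftrightarrow> a \<in> X \<and> b \<notin> X \<and> c \<notin> X \<and> d \<notin> X"
    "X \<inter> {a, b, c, d} = {a, b} \<longleftrightarrow> a \<in> X \<and> b \<in> X \<and> c \<notin> X \<and> d \<notin> X"
    "X \<inter> {a, b, c, d} = {a, b, c} \<longleftrightarrow> a \<in> X \<and> b \<in> X \<and> c \<in> X \<and> d \<notin> X"
    "X \<inter> {a, b, c, d} = {a, b, c, d} \<longleftrightarrow> a \<in> X \<and> b \<in> X \<and> c \<in> X \<and> d \<in> X"
    "X \<inter> {a, b, c, d} = {b, c, d} \<longleftrightarrow> a \<notin> X \<and> b \<in> X \<and> c \<in> X \<and> d \<in> X"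
    "X \<inter> {a, b, c, d} = {c, d} \<longleftrightarrow> a \<notin> X \<and> b \<notin> X \<and> c \<in> X \<and> d \<in> X"
    "X \<inter> {a, b, c, d} = {d} \<longleftrightarrow> a \<notin> X \<and> b \<notin> X \<and> c \<notin> X \<and> d \<in> X"
    using distinct_elems by auto
  show ?thesis
    unfolding ex_le_4 segments list.set patterns zigzag_def
    by (cases "a \<in> X"; cases "b \<in> X"; cases "c \<in> X"; cases "d \<in> X"; simp)
qed

lemma distinct_stick:
  assumes "i < j" "j < k" "k < l"
  shows "distinct (stick i j k l)"
  using assms unfolding stick_def
  by (auto simp: insert_eq_iff insert_commute doubleton_eq_iff)

lemma tiling_iff_no_zigzag:
  "tiling n T \<longleftrightarrow> T \<subseteq> triples n \<and>
     (\<forall>i j k l. 1 \<le> i \<and> i < j \<and> j < k \<and> k < l \<and> l \<le> n \<longrightarrow>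
        \<not> zigzag T {i,j,k} {i,j,l} {i,k,l} \<and> \<not> zigzag T {i,j,k} {i,j,l} {j,k,l} \<and>
        \<not> zigzag T {i,j,k} {i,k,l} {j,k,l} \<and> \<not> zigzag T {i,j,l} {i,k,l} {j,k,l})"
proof -
  have "(\<exists>m \<le> 4. T \<inter> set (stick i j k l) = set (take m (stick i j k l))
                 \<or> T \<inter> set (stick i j k l) = set (drop m (stick i j k l)))
     \<longleftrightarrow> \<not> zigzag T {i,j,k} {i,j,l} {i,k,l} \<and> \<not> zigzag T {i,j,k} {i,j,l} {j,k,l} \<and>
        \<not> zigzag T {i,j,k} {i,k,l} {j,k,l} \<and> \<not> zigzag T {i,j,l} {i,k,l} {j,k,l}"
    if "i < j" "j < k" "k < l" for i j k l
    using segment_iff_no_zigzag[OF distinct_stick[OF that, unfolded stick_def]]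
    unfolding stick_def .
  then show ?thesis
    unfolding tiling_def by (intro conj_cong refl all_cong imp_cong) auto
qed

lemma tiling_if_zigzags_occur_in_tilings:
  assumes "S \<subseteq> triples n"
    and "\<And>x y z. zigzag S x y z \<Longrightarrow> \<exists>T\<in>\<T>. zigzag T x y z"
    and "\<forall>T\<in>\<T>. tiling n T"
  shows "tiling n S"
  using assms unfolding tiling_iff_no_zigzag by meson

lemma card_three_filter:
  "card {v \<in> {0, 1, 2::nat}. P v} = of_bool (P 0) + of_bool (P 1) + of_bool (P 2)"
proof -
  have "{v \<in> {0, 1, 2::nat}. P v} = {v. v = 0 \<and> P 0} \<union> {v. v = 1 \<and> P 1} \<union> {v. v = 2 \<and> P 2}"
    by auto
  then show ?thesis
    by (cases "P 0"; cases "P 1"; cases "P 2") (simp_all add: card_insert_if)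
qed

lemma sm_three_voters: "sm {0, 1, 2::nat} ((!) [A, B, C]) = median3 A B C"
  unfolding sm_def median3_def card_three_filter
  by (auto simp: numeral_eq_Suc)

lemma sm_subset_Union: "sm V T \<subseteq> (\<Union>v\<in>V. T v)"
proof
  fix t assume "t \<in> sm V T"
  then have "card {v \<in> V. t \<in> T v} \<noteq> 0" by (simp add: sm_def)
  then have "{v \<in> V. t \<in> T v} \<noteq> {}" by (metis card.empty)
  then show "t \<in> (\<Union>v\<in>V. T v)" by blast
qed

lemma sm_majority_agrees:
  assumes "finite V" "odd (card V)"
  shows "2 * card {v \<in> V. t \<in> T v \<longleftrightarrow> t \<in> sm V T} > card V"
proof (cases "t \<in> sm V T")
  case True
  then show ?thesis by (simp add: sm_def)
next
  case False
  have "{v \<in> V. t \<notin> T v} = V - {v \<in> V. t \<in> T v}" by auto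
  then have complement: "card {v \<in> V. t \<notin> T v} = card V - card {v \<in> V. t \<in> T v}"
    using assms(1) by (simp add: card_Diff_subset)
  from False have "2 * card {v \<in> V. t \<in> T v} \<le> card V" by (simp add: sm_def)
  with assms(2) have "2 * card {v \<in> V. t \<in> T v} < card V"
    by (metis dvd_triv_left le_neq_implies_less)
  then show ?thesis using False complement by simp
qed

lemma majorities_intersect:
  assumes "finite V" "2 * card {v \<in> V. P v} > card V" "2 * card {v \<in> V. Q v} > card V"
  shows "\<exists>v\<in>V. P v \<and> Q v"
proof (rule ccontr)
  assume "\<not> ?thesis"
  then have "card ({v \<in> V. P v} \<union> {v \<in> V. Q v}) = card {v \<in> V. P v} + card {v \<in> V. Q v}"
    using assms(1) by (intro card_Un_disjoint) auto
  moreover have "card ({v \<in> V. P v} \<union> {v \<in> V. Q v}) \<le> card V"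
    using assms(1) by (intro card_mono) auto
  ultimately show False using assms(2,3) by linarith
qed

lemma zigzag_sm_imp_zigzag_median3:
  assumes "finite V" "odd (card V)" "zigzag (sm V T) x y z"
  shows "\<exists>u\<in>V. \<exists>w\<in>V. \<exists>r\<in>V. zigzag (median3 (T u) (T w) (T r)) x y z"
proof -
  let ?agree = "\<lambda>v t. t \<in> T v \<longleftrightarrow> t \<in> sm V T"
  note majority = sm_majority_agrees[OF assms(1,2)]
  obtain u where "u \<in> V" "?agree u x" "?agree u y"
    using majorities_intersect[OF assms(1) majority majority] by blast
  moreover obtain w where "w \<in> V" "?agree w y" "?agree w z"
    using majorities_intersect[OF assms(1) majority majority] by blast
  moreover obtain r where "r \<in> V" "?agree r x" "?agree r z"
    using majorities_intersect[OF assms(1) majority majority] by blast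
  ultimately show ?thesis
    using assms(3) unfolding zigzag_def median3_def by blast
qed

lemma tiling_sm_if_median3_tiling:
  assumes "finite V" "odd (card V)" "\<forall>v\<in>V. tiling n (T v)"
    and "\<forall>u\<in>V. \<forall>w\<in>V. \<forall>r\<in>V. tiling n (median3 (T u) (T w) (T r))"
  shows "tiling n (sm V T)"
proof (rule tiling_if_zigzags_occur_in_tilings)
  show "sm V T \<subseteq> triples n"
    using sm_subset_Union assms(3) unfolding tiling_def by blast
  show "\<exists>M\<in>{median3 (T u) (T w) (T r) | u w r. u \<in> V \<and> w \<in> V \<and> r \<in> V}. zigzag M x y z"
    if "zigzag (sm V T) x y z" for x y z
    using zigzag_sm_imp_zigzag_median3[OF assms(1,2) that] by blast
qed (use assms(4) in blast)

theorem theorem1: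
  fixes n :: nat and D :: "nat set set set"
  assumes "n \<ge> 3"
    and "\<forall>T\<in>D. tiling n T"
  shows "condorcet_super_domain n D \<longleftrightarrow>
    (\<forall>T1\<in>D. \<forall>T2\<in>D. \<forall>T3\<in>D. tiling n ((T1 \<inter> T2) \<union> (T2 \<inter> T3) \<union> (T1 \<inter> T3)))"
  unfolding median3_def[symmetric]
proof
  assume super_domain: "condorcet_super_domain n D"
  show "\<forall>T1\<in>D. \<forall>T2\<in>D. \<forall>T3\<in>D. tiling n (median3 T1 T2 T3)"
  proof (intro ballI)
    fix T1 T2 T3 assume "T1 \<in> D" "T2 \<in> D" "T3 \<in> D"
    then have "\<forall>v\<in>{0, 1, 2::nat}. [T1, T2, T3] ! v \<in> D" by (auto simp: numeral_eq_Suc)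
    then have "tiling n (sm {0, 1, 2::nat} ((!) [T1, T2, T3]))"
      using super_domain unfolding condorcet_super_domain_def by simp
    then show "tiling n (median3 T1 T2 T3)" by (simp only: sm_three_voters)
  qed
next
  assume medians: "\<forall>T1\<in>D. \<forall>T2\<in>D. \<forall>T3\<in>D. tiling n (median3 T1 T2 T3)"
  show "condorcet_super_domain n D"
    unfolding condorcet_super_domain_def
  proof (intro allI impI, elim conjE)
    fix V :: "nat set" and T assume "finite V" "odd (card V)" "\<forall>v\<in>V. T v \<in> D"
    with medians assms(2) show "tiling n (sm V T)"
      by (intro tiling_sm_if_median3_tiling) auto
  qed
qed

end
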